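(* Let $n\ge 2$, and let $f\in C((0,\infty))$ be positive and monotone non-decreasing, with $$f(u)\ge \mathcal{A}\,u^p\quad\text{for all }u>0$$ for some $p>n$ and $\mathcal{A}>0$. Then there is no positive convex function $u\in C^2(\mathbb{R}^n)$ solving $\det D^2u=f(u)$ on all of $\mathbb{R}^n$. *)

theory Defs
  imports "HOL-Analysis.Analysis"
begin

definition C2_with_hessian ::
  "(real^'n \<Rightarrow> real) \<Rightarrow> (real^'n \<Rightarrow> real^'n) \<Rightarrow> (real^'n \<Rightarrow> real^'n^'n) \<Rightarrow> bool" where
  "C2_with_hessian u g H \<longleftrightarrow>
     (\<forall>x. (u has_derivative (\<lambda>h. g x \<bullet> h)) (at x)) \<and>
     (\<forall>x. (g has_derivative (\<lambda>h. H x *v h)) (at x)) \<and>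
     continuous_on UNIV H"

end

theory Submission
  imports Defs
begin

text \<open>
  Near a point where \<open>u = m\<close>,
  compare \<open>u\<close> on a ball of radius \<open>s\<close> with a paraboloid of opening
  \<open>\<kappa> = (A m\<^sup>p)\<^bsup>1/n\<^esup>\<close>: at an interior maximum of \<open>u\<close> minus that paraboloid the Hessian
  would be at most \<open>\<kappa>/2\<close>, hence \<open>det D\<^sup>2u \<le> (\<kappa>/2)\<^sup>n < \<kappa>\<^sup>n\<close>. So \<open>u\<close> gains
  \<open>\<kappa> s\<^sup>2/8\<close> within distance \<open>2s\<close>. Taking \<open>s\<close> proportional to \<open>m\<^bsup>-(p/n-1)/2\<^esup>\<close>, \<open>u\<close>
  doubles within that distance, and as \<open>p > n\<close> these distances form a convergent
  geometric series: \<open>u\<close> doubles infinitely often inside a bounded ball, contradicting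
  its continuity.
\<close>

section \<open>Differentiation along lines\<close>

lemma
  assumes "C2_with_hessian u g H"
  shows C2_with_hessian_gradient: "(u has_derivative (\<lambda>h. g x \<bullet> h)) (at x)"
    and C2_with_hessian_hessian: "(g has_derivative (\<lambda>h. H x *v h)) (at x)"
    and C2_with_hessian_continuous_hessian: "continuous_on UNIV H"
  using assms unfolding C2_with_hessian_def by blast+

lemma C2_with_hessian_continuous: "C2_with_hessian u g H \<Longrightarrow> continuous_on S u"
  by (meson C2_with_hessian_gradient continuous_at_imp_continuous_on has_derivative_continuous)

lemma has_real_derivative_along_line:
  fixes f :: "'a::real_normed_vector \<Rightarrow> real"
  assumes "(f has_derivative D) (at (x + t *\<^sub>R e))"
  shows "((\<lambda>t. f (x + t *\<^sub>R e)) has_real_derivative D e) (at t)"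
proof -
  have "((\<lambda>t. x + t *\<^sub>R e) has_derivative (\<lambda>h. h *\<^sub>R e)) (at t)"
    by (auto intro!: derivative_eq_intros)
  from has_derivative_compose[OF this assms]
  have "((\<lambda>t. f (x + t *\<^sub>R e)) has_derivative (\<lambda>h. D (h *\<^sub>R e))) (at t)"
    by (simp add: o_def)
  moreover have "(\<lambda>h. D (h *\<^sub>R e)) = (*) (D e)"
    using linear.scaleR[OF bounded_linear.linear[OF has_derivative_bounded_linear[OF assms]]]
    by (auto simp: fun_eq_iff)
  ultimately show ?thesis
    by (simp add: has_field_derivative_def)
qed

lemma C2_with_hessian_deriv_line:
  assumes "C2_with_hessian u g H"
  shows "((\<lambda>t. u (x + t *\<^sub>R e)) has_real_derivative g (x + t *\<^sub>R e) \<bullet> e) (at t)"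
  by (rule has_real_derivative_along_line[OF C2_with_hessian_gradient[OF assms]])

lemma C2_with_hessian_deriv2_line:
  assumes "C2_with_hessian u g H"
  shows "((\<lambda>t. g (x + t *\<^sub>R e) \<bullet> c) has_real_derivative c \<bullet> (H (x + t *\<^sub>R e) *v e)) (at t)"
  using has_real_derivative_along_line[OF
      has_derivative_inner_left[OF C2_with_hessian_hessian[OF assms], of c]]
  by (simp add: inner_commute)

lemma C2_with_hessian_affine_quadratic:
  assumes "C2_with_hessian u g H"
  shows "C2_with_hessian (\<lambda>y. a * u y + b \<bullet> y + k * ((y - c) \<bullet> (y - c)))
           (\<lambda>y. a *\<^sub>R g y + b + (2 * k) *\<^sub>R (y - c)) (\<lambda>y. a *\<^sub>R H y + (2 * k) *\<^sub>R mat 1)"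
  unfolding C2_with_hessian_def
proof (intro conjI allI)
  fix x
  show "((\<lambda>y. a * u y + b \<bullet> y + k * ((y - c) \<bullet> (y - c))) has_derivative
      (\<lambda>h. (a *\<^sub>R g x + b + (2 * k) *\<^sub>R (x - c)) \<bullet> h)) (at x)"
    by (rule derivative_eq_intros C2_with_hessian_gradient[OF assms] | simp)+
      (simp add: algebra_simps inner_add_left inner_commute)
  show "((\<lambda>y. a *\<^sub>R g y + b + (2 * k) *\<^sub>R (y - c)) has_derivative
      (\<lambda>h. (a *\<^sub>R H x + (2 * k) *\<^sub>R mat 1) *v h)) (at x)"
    by (rule derivative_eq_intros C2_with_hessian_hessian[OF assms] | simp)+
      (simp add: matrix_vector_mult_add_rdistrib scaleR_matrix_vector_assoc[symmetric])
next
  show "continuous_on UNIV (\<lambda>y. a *\<^sub>R H y + (2 * k) *\<^sub>R mat 1)"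
    by (intro continuous_intros C2_with_hessian_continuous_hessian[OF assms])
qed

section \<open>Second-order conditions and symmetry of the Hessian\<close>

lemma second_derivative_nonpos_at_local_max:
  fixes f f' :: "real \<Rightarrow> real"
  assumes f': "\<And>t. (f has_real_derivative f' t) (at t)"
    and f'': "(f' has_real_derivative d) (at x)"
    and "\<delta> > 0" and max: "\<And>t. \<bar>t - x\<bar> < \<delta> \<Longrightarrow> f t \<le> f x"
  shows "d \<le> 0"
proof (rule ccontr)
  assume "\<not> d \<le> 0"
  have "f' x = 0"
    by (rule DERIV_local_max[OF f' \<open>\<delta> > 0\<close>]) (use max in \<open>auto simp: abs_minus_commute\<close>)
  moreover obtain e where "e > 0" and inc: "\<And>h. h > 0 \<Longrightarrow> h < e \<Longrightarrow> f' x < f' (x + h)"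
    using DERIV_pos_inc_right[OF f''] \<open>\<not> d \<le> 0\<close> by force
  define h where "h = min e \<delta> / 2"
  have h: "0 < h" "h < e" "h < \<delta>"
    using \<open>e > 0\<close> \<open>\<delta> > 0\<close> unfolding h_def by auto
  obtain z where z: "x < z" "z < x + h" "f (x + h) - f x = h * f' z"
    using MVT2[of x "x + h" f f'] h f' by auto
  ultimately have "f (x + h) > f x"
    using inc[of "z - x"] h by (simp add: algebra_simps)
  with max[of "x + h"] h show False by simp
qed

lemma C2_with_hessian_form_nonpos_at_local_max:
  assumes C2: "C2_with_hessian u g H"
    and "\<delta> > 0" and max: "\<And>y. dist x y < \<delta> \<Longrightarrow> u y \<le> u x"
  shows "e \<bullet> (H x *v e) \<le> 0"
proof (rule second_derivative_nonpos_at_local_max)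
  show "((\<lambda>t. u (x + t *\<^sub>R e)) has_real_derivative g (x + t *\<^sub>R e) \<bullet> e) (at t)" for t
    by (rule C2_with_hessian_deriv_line[OF C2])
  show "((\<lambda>t. g (x + t *\<^sub>R e) \<bullet> e) has_real_derivative e \<bullet> (H x *v e)) (at 0)"
    using C2_with_hessian_deriv2_line[OF C2, of x e e 0] by simp
  show "\<delta> / (norm e + 1) > 0"
    using \<open>\<delta> > 0\<close> by (simp add: add_nonneg_pos)
  show "u (x + t *\<^sub>R e) \<le> u (x + 0 *\<^sub>R e)" if "\<bar>t - 0\<bar> < \<delta> / (norm e + 1)" for t
  proof -
    have "\<bar>t\<bar> * norm e \<le> \<bar>t\<bar> * (norm e + 1)"
      by (simp add: mult_left_mono)
    also have "\<dots> < \<delta>"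
      using that by (simp add: pos_less_divide_eq add_nonneg_pos)
    finally show ?thesis
      using max[of "x + t *\<^sub>R e"] by (simp add: dist_norm)
  qed
qed

lemma convex_on_imp_above_tangent_plane:
  fixes u :: "'a::real_inner \<Rightarrow> real"
  assumes cv: "convex_on UNIV u" and du: "(u has_derivative (\<lambda>h. g \<bullet> h)) (at x)"
  shows "u y \<ge> u x + g \<bullet> (y - x)"
proof -
  let ?\<phi> = "\<lambda>t. u (x + t *\<^sub>R (y - x))"
  have "convex_on UNIV ?\<phi>"
  proof (rule convex_onI)
    fix t a b :: real assume t: "0 < t" "t < 1"
    have "x + ((1 - t) *\<^sub>R a + t *\<^sub>R b) *\<^sub>R (y - x)
        = (1 - t) *\<^sub>R (x + a *\<^sub>R (y - x)) + t *\<^sub>R (x + b *\<^sub>R (y - x))"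
      by (simp add: algebra_simps)
    then show "?\<phi> ((1 - t) *\<^sub>R a + t *\<^sub>R b) \<le> (1 - t) * ?\<phi> a + t * ?\<phi> b"
      using convex_onD[OF cv, of t "x + a *\<^sub>R (y - x)" "x + b *\<^sub>R (y - x)"] t by simp
  qed simp
  moreover have "(?\<phi> has_real_derivative g \<bullet> (y - x)) (at 0)"
    using has_real_derivative_along_line[of u _ x 0 "y - x"] du by simp
  ultimately have "?\<phi> 1 - ?\<phi> 0 \<ge> g \<bullet> (y - x) * (1 - 0)"
    by (intro convex_on_imp_above_tangent) auto
  then show ?thesis by simp
qed

lemma convex_C2_hessian_psd:
  assumes C2: "C2_with_hessian u g H" and cv: "convex_on UNIV u"
  shows "0 \<le> e \<bullet> (H x *v e)"
proof -
  let ?v = "\<lambda>y. (-1) * u y + g x \<bullet> y + 0 * ((y - x) \<bullet> (y - x))"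
  have "?v y \<le> ?v x" for y
    using convex_on_imp_above_tangent_plane[OF cv C2_with_hessian_gradient[OF C2], of x y]
    by (simp add: inner_diff_right)
  then have "e \<bullet> (((-1) *\<^sub>R H x + (2 * 0) *\<^sub>R mat 1) *v e) \<le> 0"
    by (intro C2_with_hessian_form_nonpos_at_local_max[OF C2_with_hessian_affine_quadratic[OF C2],
          of 1]) auto
  then show ?thesis
    unfolding matrix_vector_mult_add_rdistrib scaleR_matrix_vector_assoc[symmetric] by simp
qed

lemma C2_with_hessian_mixed_difference:
  assumes C2: "C2_with_hessian u g H" and "s > 0"
  obtains \<tau> \<rho> where "0 < \<tau>" "\<tau> < s" "0 < \<rho>" "\<rho> < s"
    "u (x + s *\<^sub>R v + s *\<^sub>R w) - u (x + s *\<^sub>R v) - u (x + s *\<^sub>R w) + u x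
      = s\<^sup>2 * (v \<bullet> (H (x + \<tau> *\<^sub>R v + \<rho> *\<^sub>R w) *v w))"
proof -
  define a where "a t = u (x + s *\<^sub>R w + t *\<^sub>R v) - u (x + t *\<^sub>R v)" for t
  define a' where "a' t = g (x + s *\<^sub>R w + t *\<^sub>R v) \<bullet> v - g (x + t *\<^sub>R v) \<bullet> v" for t
  have "(a has_real_derivative a' t) (at t)" for t
    unfolding a_def a'_def by (intro DERIV_diff C2_with_hessian_deriv_line[OF C2])
  then obtain \<tau> where \<tau>: "0 < \<tau>" "\<tau> < s" "a s - a 0 = s * a' \<tau>"
    using MVT2[of 0 s a a'] \<open>s > 0\<close> by auto
  define b where "b r = g (x + \<tau> *\<^sub>R v + r *\<^sub>R w) \<bullet> v" for r
  have "(b has_real_derivative v \<bullet> (H (x + \<tau> *\<^sub>R v + r *\<^sub>R w) *v w)) (at r)" for r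
    unfolding b_def by (rule C2_with_hessian_deriv2_line[OF C2])
  then obtain \<rho> where \<rho>: "0 < \<rho>" "\<rho> < s"
      "b s - b 0 = s * (v \<bullet> (H (x + \<tau> *\<^sub>R v + \<rho> *\<^sub>R w) *v w))"
    using MVT2[of 0 s b "\<lambda>r. v \<bullet> (H (x + \<tau> *\<^sub>R v + r *\<^sub>R w) *v w)"] \<open>s > 0\<close>
    by auto
  have "a' \<tau> = b s - b 0"
    and "a s - a 0 = u (x + s *\<^sub>R v + s *\<^sub>R w) - u (x + s *\<^sub>R v) - u (x + s *\<^sub>R w) + u x"
    unfolding a_def a'_def b_def by (simp_all add: algebra_simps)
  with \<tau> \<rho> show ?thesis
    by (intro that[of \<tau> \<rho>]) (simp_all add: power2_eq_square)
qed

lemma C2_with_hessian_isCont_form: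
  assumes "C2_with_hessian u g H"
  shows "isCont (\<lambda>y. v \<bullet> (H y *v w)) x"
proof -
  have "isCont H x"
    using C2_with_hessian_continuous_hessian[OF assms] by (simp add: continuous_on_eq_continuous_at)
  moreover have "(\<lambda>y. v \<bullet> (H y *v w)) = (\<lambda>y. \<Sum>i\<in>UNIV. v $ i * (\<Sum>j\<in>UNIV. H y $ i $ j * w $ j))"
    by (simp add: inner_vec_def matrix_vector_mult_def fun_eq_iff mult.commute)
  ultimately show ?thesis
    by (auto intro!: continuous_intros isCont_vec_nth)
qed

lemma C2_with_hessian_mixed_difference_quotient_tendsto:
  assumes C2: "C2_with_hessian u g H"
  shows "((\<lambda>s. (u (x + s *\<^sub>R v + s *\<^sub>R w) - u (x + s *\<^sub>R v) - u (x + s *\<^sub>R w) + u x) / s\<^sup>2)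
           \<longlongrightarrow> v \<bullet> (H x *v w)) (at_right 0)"
proof (rule tendstoI)
  fix \<epsilon> :: real assume "\<epsilon> > 0"
  moreover have "\<forall>e>0. \<exists>d>0. \<forall>y. dist y x < d \<longrightarrow> dist (v \<bullet> (H y *v w)) (v \<bullet> (H x *v w)) < e"
    using C2_with_hessian_isCont_form[OF C2, where v = v and w = w and x = x]
    unfolding continuous_at_eps_delta .
  ultimately obtain d where "d > 0"
    and d: "\<And>y. dist y x < d \<Longrightarrow> dist (v \<bullet> (H y *v w)) (v \<bullet> (H x *v w)) < \<epsilon>"
    by blast
  have "dist ((u (x + s *\<^sub>R v + s *\<^sub>R w) - u (x + s *\<^sub>R v) - u (x + s *\<^sub>R w) + u x) / s\<^sup>2)
      (v \<bullet> (H x *v w)) < \<epsilon>" if "0 < s" "s < d / (norm v + norm w + 1)" for s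
  proof -
    obtain \<tau> \<rho> where \<tau>\<rho>: "0 < \<tau>" "\<tau> < s" "0 < \<rho>" "\<rho> < s" and
      eq: "u (x + s *\<^sub>R v + s *\<^sub>R w) - u (x + s *\<^sub>R v) - u (x + s *\<^sub>R w) + u x
        = s\<^sup>2 * (v \<bullet> (H (x + \<tau> *\<^sub>R v + \<rho> *\<^sub>R w) *v w))"
      using C2_with_hessian_mixed_difference[OF C2 \<open>0 < s\<close>] by blast
    have "dist (x + \<tau> *\<^sub>R v + \<rho> *\<^sub>R w) x \<le> \<tau> * norm v + \<rho> * norm w"
      using norm_triangle_ineq[of "\<tau> *\<^sub>R v" "\<rho> *\<^sub>R w"] \<tau>\<rho> by (simp add: dist_norm)
    also have "\<dots> \<le> s * (norm v + norm w + 1)"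
      using \<tau>\<rho> mult_right_mono[of \<tau> s "norm v"] mult_right_mono[of \<rho> s "norm w"]
      by (simp add: distrib_left)
    also have "\<dots> < d"
      using that by (simp add: pos_less_divide_eq add_nonneg_pos)
    finally show ?thesis
      using d eq \<open>0 < s\<close> by simp
  qed
  then show "\<forall>\<^sub>F s in at_right 0. dist ((u (x + s *\<^sub>R v + s *\<^sub>R w) - u (x + s *\<^sub>R v)
      - u (x + s *\<^sub>R w) + u x) / s\<^sup>2) (v \<bullet> (H x *v w)) < \<epsilon>"
    unfolding eventually_at_right_field
    by (intro exI[of _ "d / (norm v + norm w + 1)"]) (simp add: \<open>d > 0\<close> add_nonneg_pos)
qed

lemma C2_with_hessian_symmetric:
  assumes C2: "C2_with_hessian u g H"
  shows "v \<bullet> (H x *v w) = w \<bullet> (H x *v v)"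
proof (rule tendsto_unique[OF trivial_limit_at_right_real])
  show "((\<lambda>s. (u (x + s *\<^sub>R v + s *\<^sub>R w) - u (x + s *\<^sub>R v) - u (x + s *\<^sub>R w) + u x) / s\<^sup>2)
           \<longlongrightarrow> v \<bullet> (H x *v w)) (at_right 0)"
    by (rule C2_with_hessian_mixed_difference_quotient_tendsto[OF C2])
  show "((\<lambda>s. (u (x + s *\<^sub>R v + s *\<^sub>R w) - u (x + s *\<^sub>R v) - u (x + s *\<^sub>R w) + u x) / s\<^sup>2)
           \<longlongrightarrow> w \<bullet> (H x *v v)) (at_right 0)"
    using C2_with_hessian_mixed_difference_quotient_tendsto[OF C2, of x w v]
    by (simp add: algebra_simps)
qed

section \<open>Determinants of positive semidefinite matrices\<close>

lemma quadratic_nonneg_imp_discriminant_le: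
  fixes a b c :: real
  assumes nonneg: "\<And>t. 0 \<le> a * t\<^sup>2 + 2 * b * t + c"
  shows "b\<^sup>2 \<le> a * c"
proof (cases "a = 0")
  case True
  have "0 \<le> a * (-(c + 1) / (2 * b))\<^sup>2 + 2 * b * (-(c + 1) / (2 * b)) + c"
    by (rule nonneg)
  with True have "b = 0"
    by (cases "b = 0") (simp_all add: field_simps)
  with True show ?thesis by simp
next
  case False
  have "a > 0"
  proof (rule ccontr)
    assume "\<not> a > 0"
    with False have "a < 0" by simp
    define T where "T = sqrt ((1 + \<bar>c\<bar>) / - a)"
    have "a * T\<^sup>2 = - (1 + \<bar>c\<bar>)"
      using \<open>a < 0\<close> by (simp add: T_def divide_nonneg_neg)
    moreover have "0 \<le> a * T\<^sup>2 + 2 * b * T + c" and "0 \<le> a * (- T)\<^sup>2 + 2 * b * (- T) + c"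
      by (rule nonneg)+
    ultimately show False by simp
  qed
  moreover have "0 \<le> a * (- b / a)\<^sup>2 + 2 * b * (- b / a) + c"
    by (rule nonneg)
  ultimately show ?thesis
    by (simp add: field_simps power2_eq_square)
qed

lemma psd_form_Cauchy_Schwarz:
  fixes M :: "real^'n^'n"
  assumes sym: "\<And>x y. x \<bullet> (M *v y) = y \<bullet> (M *v x)"
    and psd: "\<And>x. 0 \<le> x \<bullet> (M *v x)"
  shows "(x \<bullet> (M *v y))\<^sup>2 \<le> (y \<bullet> (M *v y)) * (x \<bullet> (M *v x))"
proof (rule quadratic_nonneg_imp_discriminant_le)
  fix t
  have "(x + t *\<^sub>R y) \<bullet> (M *v (x + t *\<^sub>R y))
      = y \<bullet> (M *v y) * t\<^sup>2 + 2 * (x \<bullet> (M *v y)) * t + x \<bullet> (M *v x)"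
    using sym[of y x]
    by (simp add: matrix_vector_right_distrib matrix_vector_mult_scaleR inner_add_left
        inner_add_right algebra_simps power2_eq_square)
  then show "0 \<le> y \<bullet> (M *v y) * t\<^sup>2 + 2 * (x \<bullet> (M *v y)) * t + x \<bullet> (M *v x)"
    using psd by metis
qed

lemma norm_matrix_vector_le_of_psd_form_le:
  fixes M :: "real^'n^'n"
  assumes sym: "\<And>x y. x \<bullet> (M *v y) = y \<bullet> (M *v x)"
    and psd: "\<And>x. 0 \<le> x \<bullet> (M *v x)"
    and le: "\<And>x. x \<bullet> (M *v x) \<le> \<kappa> * (x \<bullet> x)" and "\<kappa> \<ge> 0"
  shows "norm (M *v x) \<le> \<kappa> * norm x"
proof -
  define y where "y = M *v x"
  have "(y \<bullet> y)\<^sup>2 = (x \<bullet> (M *v y))\<^sup>2"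
    using sym[of x y] by (simp only: y_def)
  also have "\<dots> \<le> (y \<bullet> (M *v y)) * (x \<bullet> (M *v x))"
    by (rule psd_form_Cauchy_Schwarz[OF sym psd])
  also have "\<dots> \<le> (\<kappa> * (y \<bullet> y)) * (\<kappa> * (x \<bullet> x))"
    by (intro mult_mono le psd mult_nonneg_nonneg \<open>\<kappa> \<ge> 0\<close> inner_ge_zero)
  also have "\<dots> = (y \<bullet> y) * (\<kappa>\<^sup>2 * (x \<bullet> x))"
    by (simp only: power2_eq_square mult_ac)
  finally have "(y \<bullet> y) * (y \<bullet> y) \<le> (y \<bullet> y) * (\<kappa>\<^sup>2 * (x \<bullet> x))"
    by (simp only: power2_eq_square)
  then have "y \<bullet> y \<le> \<kappa>\<^sup>2 * (x \<bullet> x)"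
    by (cases "y = 0") (simp_all add: mult_le_cancel_left_pos)
  then have "(norm y)\<^sup>2 \<le> (\<kappa> * norm x)\<^sup>2"
    by (simp add: power2_norm_eq_inner power_mult_distrib)
  then have "norm y \<le> \<kappa> * norm x"
    by (rule power2_le_imp_le) (simp add: \<open>\<kappa> \<ge> 0\<close>)
  then show ?thesis
    by (simp only: y_def)
qed

lemma abs_det_le_of_entries_le:
  fixes M :: "real^'n^'n"
  assumes "\<And>i j. \<bar>M $ i $ j\<bar> \<le> c"
  shows "\<bar>det M\<bar> \<le> fact CARD('n) * c ^ CARD('n)"
proof -
  have "\<bar>det M\<bar> \<le> (\<Sum>p\<in>{p. p permutes (UNIV::'n set)}. \<bar>of_int (sign p) * (\<Prod>i\<in>UNIV. M $ i $ p i)\<bar>)"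
    unfolding det_def by (rule sum_abs)
  also have "\<dots> \<le> (\<Sum>p\<in>{p. p permutes (UNIV::'n set)}. c ^ CARD('n))"
  proof (rule sum_mono)
    fix p
    have "\<bar>of_int (sign p) * (\<Prod>i\<in>UNIV. M $ i $ p i)\<bar> = (\<Prod>i\<in>UNIV. \<bar>M $ i $ p i\<bar>)"
      by (simp add: abs_mult sign_def abs_prod)
    also have "\<dots> \<le> (\<Prod>i\<in>(UNIV::'n set). c)"
      by (rule prod_mono) (use assms in auto)
    finally show "\<bar>of_int (sign p) * (\<Prod>i\<in>UNIV. M $ i $ p i)\<bar> \<le> c ^ CARD('n)"
      by simp
  qed
  also have "\<dots> = fact CARD('n) * c ^ CARD('n)"
    by (simp add: card_permutations)
  finally show ?thesis .
qed

lemma le_of_pow_le_const_mult_pow: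
  fixes a b N :: real
  assumes "b \<ge> 0" and pow_le: "\<And>k. a ^ k \<le> N * b ^ k"
  shows "a \<le> b"
proof (rule ccontr)
  assume "\<not> a \<le> b"
  with \<open>b \<ge> 0\<close> have "a > 0" by simp
  show False
  proof (cases "b = 0")
    case True
    with pow_le[of 1] pow_le[of 0] \<open>a > 0\<close> show False by simp
  next
    case False
    with \<open>b \<ge> 0\<close> \<open>\<not> a \<le> b\<close> have "a / b > 1"
      by simp
    then obtain k where "N < (a / b) ^ k"
      using real_arch_pow by blast
    with pow_le[of k] False \<open>b \<ge> 0\<close> show False
      by (simp add: power_divide pos_less_divide_eq)
  qed
qed

text \<open>
  No spectral theorem is needed: \<open>det (M\<^sup>k) = (det M)\<^sup>k\<close> while the entries of \<open>M\<^sup>k\<close> are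
  bounded by \<open>\<kappa>\<^sup>k\<close>, so \<open>\<bar>det M\<bar>\<^sup>k \<le> n! \<kappa>\<^bsup>nk\<^esup>\<close> for every \<open>k\<close>.
\<close>

lemma abs_det_le_of_norm_matrix_vector_le:
  fixes M :: "real^'n^'n"
  assumes bound: "\<And>x. norm (M *v x) \<le> \<kappa> * norm x"
  shows "\<bar>det M\<bar> \<le> \<kappa> ^ CARD('n)"
proof -
  have "\<kappa> \<ge> 0"
    using order_trans[OF norm_ge_zero bound[of "axis undefined 1"]] by simp
  define P :: "nat \<Rightarrow> real^'n^'n" where "P k = ((**) M ^^ k) (mat 1)" for k
  have norm_P: "norm (P k *v x) \<le> \<kappa> ^ k * norm x" for k x
  proof (induction k arbitrary: x)
    case (Suc k)
    have "norm (P (Suc k) *v x) = norm (M *v (P k *v x))"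
      by (simp add: P_def matrix_vector_mul_assoc)
    also have "\<dots> \<le> \<kappa> * (\<kappa> ^ k * norm x)"
      using bound[of "P k *v x"] Suc \<open>\<kappa> \<ge> 0\<close> by (meson mult_left_mono order_trans)
    finally show ?case by simp
  qed (simp add: P_def)
  have "\<bar>P k $ i $ j\<bar> \<le> \<kappa> ^ k" for k i j
  proof -
    have "P k $ i $ j = (P k *v axis j 1) $ i"
      by (simp add: matrix_vector_mult_def axis_def if_distrib cong: if_cong)
    also have "\<bar>\<dots>\<bar> \<le> norm (P k *v axis j 1)"
      by (rule component_le_norm_cart)
    also have "\<dots> \<le> \<kappa> ^ k"
      using norm_P[of k "axis j 1"] by simp
    finally show ?thesis .
  qed
  then have "\<bar>det (P k)\<bar> \<le> fact CARD('n) * (\<kappa> ^ k) ^ CARD('n)" for k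
    by (rule abs_det_le_of_entries_le)
  moreover have "det (P k) = det M ^ k" for k
    by (induction k) (simp_all add: P_def det_mul)
  ultimately have "\<bar>det M\<bar> ^ k \<le> fact CARD('n) * (\<kappa> ^ CARD('n)) ^ k" for k
    by (simp add: power_abs power_mult[symmetric] mult.commute)
  then show ?thesis
    by (rule le_of_pow_le_const_mult_pow[rotated]) (simp add: \<open>\<kappa> \<ge> 0\<close>)
qed

lemma det_le_of_psd_form_le:
  fixes M :: "real^'n^'n"
  assumes "\<And>x y. x \<bullet> (M *v y) = y \<bullet> (M *v x)"
    and "\<And>x. 0 \<le> x \<bullet> (M *v x)"
    and "\<And>x. x \<bullet> (M *v x) \<le> \<kappa> * (x \<bullet> x)" and "\<kappa> \<ge> 0"
  shows "det M \<le> \<kappa> ^ CARD('n)"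
  using abs_det_le_of_norm_matrix_vector_le[OF norm_matrix_vector_le_of_psd_form_le[OF assms]]
  by simp

section \<open>Comparison with paraboloids\<close>

lemma C2_convex_det_ge_imp_boundary_growth:
  fixes u :: "real^'n \<Rightarrow> real"
  assumes C2: "C2_with_hessian u g H" and cv: "convex_on UNIV u"
    and "\<kappa> > 0" and "s > 0"
    and det_ge: "\<And>y. y \<in> cball c s \<Longrightarrow> det (H y) \<ge> \<kappa> ^ CARD('n)"
  obtains y where "dist c y = s" and "u y - u c - g c \<bullet> (y - c) \<ge> \<kappa> * s\<^sup>2 / 4"
proof (rule ccontr)
  assume "\<not> thesis"
  with that have small: "u y - u c - g c \<bullet> (y - c) < \<kappa> * s\<^sup>2 / 4" if "dist c y = s" for y
    using that by force
  define w where "w y = 1 * u y + (- g c) \<bullet> y + (- \<kappa> / 4) * ((y - c) \<bullet> (y - c))" for y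
  have C2w: "C2_with_hessian w (\<lambda>y. 1 *\<^sub>R g y + - g c + (2 * (- \<kappa> / 4)) *\<^sub>R (y - c))
      (\<lambda>y. 1 *\<^sub>R H y + (2 * (- \<kappa> / 4)) *\<^sub>R mat 1)"
    unfolding w_def by (rule C2_with_hessian_affine_quadratic[OF C2])
  have "cball c s \<noteq> {}"
    using \<open>s > 0\<close> by simp
  then obtain x where x: "x \<in> cball c s" and max: "\<And>y. y \<in> cball c s \<Longrightarrow> w y \<le> w x"
    using continuous_attains_sup[OF compact_cball _ C2_with_hessian_continuous[OF C2w]] by blast
  have "dist c x < s"
  proof (rule ccontr)
    assume "\<not> dist c x < s"
    with x have "dist c x = s" by simp
    then have "(x - c) \<bullet> (x - c) = s\<^sup>2"
      by (simp add: dist_norm norm_minus_commute power2_norm_eq_inner[symmetric])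
    with small[OF \<open>dist c x = s\<close>] have "w x < w c"
      by (simp add: w_def inner_diff_right)
    with max[of c] \<open>s > 0\<close> show False by simp
  qed
  have "e \<bullet> (H x *v e) \<le> \<kappa> / 2 * (e \<bullet> e)" for e
  proof -
    have "dist x y < s - dist c x \<Longrightarrow> w y \<le> w x" for y
      using max dist_triangle[of c y x] by simp
    then have "e \<bullet> ((1 *\<^sub>R H x + (2 * (- \<kappa> / 4)) *\<^sub>R mat 1) *v e) \<le> 0"
      using \<open>dist c x < s\<close> by (intro C2_with_hessian_form_nonpos_at_local_max[OF C2w]) auto
    then show ?thesis
      unfolding matrix_vector_mult_add_rdistrib scaleR_matrix_vector_assoc[symmetric]
      by (simp add: inner_add_right inner_diff_right)
  qed
  then have "det (H x) \<le> (\<kappa> / 2) ^ CARD('n)"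
    using C2_with_hessian_symmetric[OF C2] convex_C2_hessian_psd[OF C2 cv] \<open>\<kappa> > 0\<close>
    by (intro det_le_of_psd_form_le) auto
  also have "\<dots> < \<kappa> ^ CARD('n)"
    using \<open>\<kappa> > 0\<close> by (intro power_strict_mono) auto
  finally show False
    using det_ge[OF x] by simp
qed

lemma inner_sgn_self: "x \<bullet> sgn x = norm x"
  by (cases "x = 0") (simp_all add: sgn_div_norm power2_norm_eq_inner[symmetric] power2_eq_square)

text \<open>
  The ball is centred at \<open>x + s sgn (g x)\<close>, so the tangent plane at \<open>x\<close> keeps \<open>u \<ge> u x\<close>
  on it. The linear term \<open>g c \<bullet> (y - c)\<close> in the boundary growth is compensated by the
  tangent plane at the centre \<open>c\<close> in direction \<open>g c\<close>, so either \<open>y\<close> or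
  \<open>c + s sgn (g c)\<close> carries half of that growth.
\<close>

lemma C2_convex_growth_step:
  fixes u :: "real^'n \<Rightarrow> real"
  assumes C2: "C2_with_hessian u g H" and cv: "convex_on UNIV u" and pos: "\<And>y. u y > 0"
    and "\<kappa> > 0" and "s > 0"
    and det_ge: "\<And>y. u y \<ge> u x \<Longrightarrow> det (H y) \<ge> \<kappa> ^ CARD('n)"
  obtains z where "dist x z \<le> 2 * s" and "u z \<ge> \<kappa> * s\<^sup>2 / 8"
proof -
  have tangent: "u y \<ge> u a + g a \<bullet> (y - a)" for a y
    by (rule convex_on_imp_above_tangent_plane[OF cv C2_with_hessian_gradient[OF C2]])
  have inner_ge: "g a \<bullet> v \<ge> - (s * norm (g a))" if "norm v \<le> s" for a v
    using Cauchy_Schwarz_ineq2[of "g a" v] mult_left_mono[OF that norm_ge_zero[of "g a"]]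
    by (smt (verit) mult.commute[of s "norm (g a)"])
  define step where "step a = a + s *\<^sub>R sgn (g a)" for a
  have dist_step: "dist a (step a) \<le> s" for a
    using \<open>s > 0\<close> by (simp add: step_def dist_norm norm_sgn)
  have u_step: "u (step a) \<ge> u a + s * norm (g a)" for a
    using tangent[of a "step a"] by (simp add: step_def inner_sgn_self)
  let ?c = "step x"
  have "u y \<ge> u x" if "y \<in> cball ?c s" for y
  proof -
    have "g x \<bullet> (y - ?c) \<ge> - (s * norm (g x))"
      using that by (intro inner_ge) (simp add: dist_norm norm_minus_commute)
    then show ?thesis
      using tangent[of x y] by (simp add: step_def inner_diff_right inner_add_right inner_sgn_self)
  qed
  then obtain y where "dist ?c y = s" and y: "u y - u ?c - g ?c \<bullet> (y - ?c) \<ge> \<kappa> * s\<^sup>2 / 4"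
    using C2_convex_det_ge_imp_boundary_growth[OF C2 cv \<open>\<kappa> > 0\<close> \<open>s > 0\<close>] det_ge by metis
  have "g ?c \<bullet> (y - ?c) \<ge> - (s * norm (g ?c))"
    using \<open>dist ?c y = s\<close> by (intro inner_ge) (simp add: dist_norm norm_minus_commute)
  with y u_step[of ?c] pos[of ?c] have "u y \<ge> \<kappa> * s\<^sup>2 / 8 \<or> u (step ?c) \<ge> \<kappa> * s\<^sup>2 / 8"
    by linarith
  moreover have "dist x y \<le> 2 * s" and "dist x (step ?c) \<le> 2 * s"
    using dist_triangle[of x y ?c] dist_triangle[of x "step ?c" ?c] dist_step[of x]
      dist_step[of ?c] \<open>dist ?c y = s\<close> by (simp_all add: dist_commute)
  ultimately show ?thesis
    using that by blast
qed

section \<open>Doubling\<close>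

lemma doubling_chain:
  fixes u :: "'a::metric_space \<Rightarrow> real" and x0 :: 'a
  assumes pos: "\<And>x. u x > 0" and "a > 0"
    and step: "\<And>x. \<exists>z. dist x z \<le> D * u x powr (- a) \<and> 2 * u x \<le> u z"
  defines "r \<equiv> 2 powr (- a)" and "T \<equiv> D * u x0 powr (- a) / (1 - 2 powr (- a))"
  shows "\<exists>x. dist x0 x \<le> T * (1 - r ^ k) \<and> 2 ^ k * u x0 \<le> u x"
proof (induction k)
  case (Suc k)
  have "r < 1"
    using \<open>a > 0\<close> by (simp add: r_def powr_less_one)
  from Suc obtain x where x: "dist x0 x \<le> T * (1 - r ^ k)" "2 ^ k * u x0 \<le> u x"
    by blast
  obtain z where z: "dist x z \<le> D * u x powr (- a)" "2 * u x \<le> u z"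
    using step by blast
  have "D \<ge> 0"
    using order_trans[OF zero_le_dist z(1)] pos[of x] by (simp add: zero_le_mult_iff)
  have "u x powr (- a) \<le> (2 ^ k * u x0) powr (- a)"
    using x(2) pos[of x0] \<open>a > 0\<close> by (intro powr_mono2') auto
  also have "\<dots> = r ^ k * u x0 powr (- a)"
    using pos[of x0]
    by (simp add: powr_mult r_def powr_realpow[symmetric] powr_powr mult.commute)
  finally have "D * u x powr (- a) \<le> D * (r ^ k * u x0 powr (- a))"
    using \<open>D \<ge> 0\<close> by (rule mult_left_mono)
  also have "\<dots> = T * (1 - r) * r ^ k"
    using \<open>r < 1\<close> by (simp add: T_def[folded r_def])
  finally have "D * u x powr (- a) \<le> T * (1 - r) * r ^ k" .
  with x(1) z(1) dist_triangle[of x0 z x] have "dist x0 z \<le> T * (1 - r ^ Suc k)"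
    by (simp add: algebra_simps)
  moreover have "2 ^ Suc k * u x0 \<le> u z"
    using x(2) z(2) by simp
  ultimately show ?case
    by blast
qed simp

lemma continuous_no_doubling_with_shrinking_steps:
  fixes u :: "'a::heine_borel \<Rightarrow> real"
  assumes cont: "continuous_on UNIV u" and pos: "\<And>x. u x > 0" and "a > 0"
    and step: "\<And>x. \<exists>z. dist x z \<le> D * u x powr (- a) \<and> 2 * u x \<le> u z"
  shows False
proof -
  fix x0 :: 'a
  define r :: real where "r = 2 powr (- a)"
  define T where "T = D * u x0 powr (- a) / (1 - r)"
  have "cball x0 \<bar>T\<bar> \<noteq> {}"
    by simp
  then obtain xm where max: "\<And>y. y \<in> cball x0 \<bar>T\<bar> \<Longrightarrow> u y \<le> u xm"
    using continuous_attains_sup[OF compact_cball _ continuous_on_subset[OF cont subset_UNIV]]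
    by blast
  obtain k where "u xm / u x0 < 2 ^ k"
    using real_arch_pow[of 2 "u xm / u x0"] by auto
  then have "u xm < 2 ^ k * u x0"
    using pos[of x0] by (simp add: divide_less_eq)
  obtain x where x: "dist x0 x \<le> T * (1 - r ^ k)" "2 ^ k * u x0 \<le> u x"
    using doubling_chain[OF pos \<open>a > 0\<close> step, of x0 k] unfolding T_def r_def by blast
  have "0 \<le> r" "r < 1"
    using \<open>a > 0\<close> by (simp_all add: r_def powr_less_one)
  then have "0 \<le> 1 - r ^ k" "1 - r ^ k \<le> 1"
    by (simp_all add: power_le_one)
  then have "T * (1 - r ^ k) \<le> \<bar>T\<bar>"
    by (metis abs_ge_self abs_ge_zero mult_left_le mult_right_mono order_trans)
  with x max[of x] \<open>u xm < 2 ^ k * u x0\<close> show False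
    by simp
qed

lemma monge_ampere_power_growth_doubling:
  fixes u :: "real^'n \<Rightarrow> real" and f :: "real \<Rightarrow> real"
  assumes C2: "C2_with_hessian u g H" and cv: "convex_on UNIV u" and pos: "\<And>x. u x > 0"
    and det_eq: "\<And>x. det (H x) = f (u x)"
    and growth: "\<And>s. s > 0 \<Longrightarrow> f s \<ge> A * s powr p" and "A > 0" and "p \<ge> 0"
  defines "N \<equiv> real CARD('n)"
  shows "\<exists>z. dist x z \<le> 2 * sqrt (16 / A powr (1 / N)) * u x powr (- ((p / N - 1) / 2))
           \<and> 2 * u x \<le> u z"
proof -
  \<comment> \<open>\<open>s\<close> is chosen so that \<open>\<kappa> s\<^sup>2 / 8 = 2 u x\<close>.\<close>
  define m where "m = u x"
  define \<kappa> where "\<kappa> = (A * m powr p) powr (1 / N)"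
  define s where "s = sqrt (16 / A powr (1 / N)) * m powr (- ((p / N - 1) / 2))"
  have "m > 0" "N > 0"
    using pos by (simp_all add: m_def N_def)
  have "\<kappa> > 0" "s > 0"
    using \<open>A > 0\<close> \<open>m > 0\<close> by (simp_all add: \<kappa>_def s_def)
  have \<kappa>_pow: "\<kappa> ^ CARD('n) = A * m powr p"
    using \<open>A > 0\<close> \<open>m > 0\<close> \<open>N > 0\<close>
    by (simp add: \<kappa>_def powr_realpow[symmetric] powr_powr N_def)
  have "\<kappa> = A powr (1 / N) * m powr (p / N)"
    using \<open>A > 0\<close> \<open>m > 0\<close> by (simp add: \<kappa>_def powr_mult powr_powr)
  moreover have "s\<^sup>2 = 16 / A powr (1 / N) * m powr (1 - p / N)"
  proof -
    have "(m powr (- ((p / N - 1) / 2)))\<^sup>2 = m powr (- ((p / N - 1) / 2) + - ((p / N - 1) / 2))"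
      by (simp add: power2_eq_square powr_add[symmetric])
    also have "- ((p / N - 1) / 2) + - ((p / N - 1) / 2) = 1 - p / N"
      by (simp add: field_simps)
    finally have "(m powr (- ((p / N - 1) / 2)))\<^sup>2 = m powr (1 - p / N)" .
    then show ?thesis
      using \<open>A > 0\<close> by (simp add: s_def power_mult_distrib)
  qed
  ultimately have "\<kappa> * s\<^sup>2 / 8 = 2 * (m powr (p / N) * m powr (1 - p / N))"
    using \<open>A > 0\<close> by simp
  also have "\<dots> = 2 * m"
    using \<open>m > 0\<close> by (simp add: powr_add[symmetric])
  finally have "\<kappa> * s\<^sup>2 / 8 = 2 * m" .
  have "det (H y) \<ge> \<kappa> ^ CARD('n)" if "u y \<ge> u x" for y
  proof -
    have "\<kappa> ^ CARD('n) \<le> A * u y powr p"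
      using that \<open>A > 0\<close> \<open>m > 0\<close> \<open>p \<ge> 0\<close> unfolding \<kappa>_pow m_def
      by (intro mult_left_mono powr_mono2) (auto simp: less_imp_le)
    also have "\<dots> \<le> det (H y)"
      using growth[OF pos] det_eq by simp
    finally show ?thesis .
  qed
  then obtain z where "dist x z \<le> 2 * s" and "u z \<ge> \<kappa> * s\<^sup>2 / 8"
    using C2_convex_growth_step[OF C2 cv pos \<open>\<kappa> > 0\<close> \<open>s > 0\<close>] by metis
  with \<open>\<kappa> * s\<^sup>2 / 8 = 2 * m\<close> show ?thesis
    by (auto simp: s_def m_def mult.assoc)
qed

theorem theorem1p3:
  fixes f :: "real \<Rightarrow> real" and A p :: real
  assumes n2: "CARD('n::finite) \<ge> 2"
    and f_cont: "continuous_on {0<..} f"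
    and f_pos: "\<And>s. s > 0 \<Longrightarrow> f s > 0"
    and f_mono: "mono_on {0<..} f"
    and p_gt: "p > real CARD('n)"
    and A_pos: "A > 0"
    and f_growth: "\<And>s. s > 0 \<Longrightarrow> f s \<ge> A * s powr p"
  shows "\<not> (\<exists>(u :: real^'n \<Rightarrow> real) g H.
              C2_with_hessian u g H \<and>
              convex_on UNIV u \<and>
              (\<forall>x. u x > 0) \<and>
              (\<forall>x. det (H x) = f (u x)))"
proof
  assume "\<exists>(u :: real^'n \<Rightarrow> real) g H. C2_with_hessian u g H \<and> convex_on UNIV u \<and>
    (\<forall>x. u x > 0) \<and> (\<forall>x. det (H x) = f (u x))"
  then obtain u :: "real^'n \<Rightarrow> real" and g H where C2: "C2_with_hessian u g H"
    and cv: "convex_on UNIV u" and pos: "\<And>x. u x > 0" and det_eq: "\<And>x. det (H x) = f (u x)"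
    by blast
  have "p \<ge> 0"
    using p_gt of_nat_0_le_iff[of "CARD('n)"] by linarith
  have "(p / real CARD('n) - 1) / 2 > 0"
    using p_gt by simp
  from continuous_no_doubling_with_shrinking_steps[OF C2_with_hessian_continuous[OF C2] pos this
      monge_ampere_power_growth_doubling[OF C2 cv pos det_eq f_growth A_pos \<open>p \<ge> 0\<close>]]
  show False .
qed

end
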